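(* Let $I$ be an instance and let $\sigma+e$ be an $I$-feasible event sequence, where $e$ is a single event. Then for each $I$-feasible event sequence $\sigma'$ that contains all events of $\sigma$ but does not contain $e$, the sequence $\sigma'+e$ is $I$-feasible.
   Context: An instance $I$ consists of finite disjoint sets $R$ (residents) and $H$ (hospitals), a positive integer quota $q_h$ for each $h\in H$, for each $r\in R$ a preference list of $r$ (a sequence of distinct members of $H$, not necessarily all), and for each $h\in H$ a preference list of $h$ (a sequence of distinct members of $R$). A match is a pair $(r,h)\in R\times H$. For a set $M$ of matches, $\mathrm{res}_h M=\{r:(r,h)\in M\}$, $\mathrm{res}\,M=\{r:(r,h)\in M\text{ for some }h\}$. An event is $(r,h)^+$ (proposal) or $(r,h)^-$ (rejection); $+$ denotes concatenation/appending. For an event sequence $\sigma$, $\mathrm{prop}(\sigma)$, $\mathrm{rej}(\sigma)$ are the sets of matches proposed/rejected in $\sigma$ and $\mathrm{tent}(\sigma)=\mathrm{prop}(\sigma)\setminus\mathrm{rej}(\sigma)$. A match $(r,h)\in M$ is ousted from $M$ in $I$ if the list of $h$ in $I$ contains at least $q_h$ residents of $\mathrm{res}_h M$ and either $r$ is not on it or $r$ is preceded on it by at least $q_h$ residents of $\mathrm{res}_h M$. $I$-feasible sequences are defined inductively: the empty sequence is $I$-feasible; if $\sigma$ is $I$-feasible then $\sigma+(r,h)^+$ is $I$-feasible if $r\notin\mathrm{res}\,\mathrm{tent}(\sigma)$, $(r,h)\notin\mathrm{prop}(\sigma)$, $h$ is on the list of $r$ in $I$ and $(r,h')\in\mathrm{rej}(\sigma)$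 for every $h'$ preceding $h$ on it; and $\sigma+(r,h)^-$ is $I$-feasible if $(r,h)$ is ousted from $\mathrm{prop}(\sigma)$ in $I$ and $(r,h)\notin\mathrm{rej}(\sigma)$. *)

theory Defs
  imports Main
begin

text \<open>An instance: residents of type 'r, hospitals of type 'h (so R and H are disjoint).\<close>
record ('r, 'h) inst =
  Res :: "'r set"
  Hos :: "'h set"
  quota :: "'h \<Rightarrow> nat"
  rpref :: "'r \<Rightarrow> 'h list"
  hpref :: "'h \<Rightarrow> 'r list"

definition wf_instance :: "('r, 'h) inst \<Rightarrow> bool" where
  "wf_instance I \<longleftrightarrow> finite (Res I) \<and> finite (Hos I)
     \<and> (\<forall>h \<in> Hos I. quota I h > 0)
     \<and> (\<forall>r \<in> Res I. distinct (rpref I r) \<and> set (rpref I r) \<subseteq> Hos I)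
     \<and> (\<forall>h \<in> Hos I. distinct (hpref I h) \<and> set (hpref I h) \<subseteq> Res I)"

datatype ('r, 'h) event = Prop 'r 'h | Rej 'r 'h

definition res_h :: "'h \<Rightarrow> ('r \<times> 'h) set \<Rightarrow> 'r set" where
  "res_h h M = {r. (r, h) \<in> M}"

definition res :: "('r \<times> 'h) set \<Rightarrow> 'r set" where
  "res M = {r. \<exists>h. (r, h) \<in> M}"

definition props :: "('r, 'h) event list \<Rightarrow> ('r \<times> 'h) set" where
  "props \<sigma> = {(r, h). Prop r h \<in> set \<sigma>}"

definition rejs :: "('r, 'h) event list \<Rightarrow> ('r \<times> 'h) set" where
  "rejs \<sigma> = {(r, h). Rej r h \<in> set \<sigma>}"

definition tent :: "('r, 'h) event list \<Rightarrow> ('r \<times> 'h) set" where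
  "tent \<sigma> = props \<sigma> - rejs \<sigma>"

definition count_in :: "'a list \<Rightarrow> 'a set \<Rightarrow> nat" where
  "count_in xs A = length (filter (\<lambda>x. x \<in> A) xs)"

definition ousted :: "('r, 'h) inst \<Rightarrow> ('r \<times> 'h) set \<Rightarrow> 'r \<Rightarrow> 'h \<Rightarrow> bool" where
  "ousted I M r h \<longleftrightarrow> (r, h) \<in> M
     \<and> count_in (hpref I h) (res_h h M) \<ge> quota I h
     \<and> (r \<notin> set (hpref I h)
        \<or> count_in (takeWhile (\<lambda>x. x \<noteq> r) (hpref I h)) (res_h h M) \<ge> quota I h)"

inductive feasible :: "('r, 'h) inst \<Rightarrow> ('r, 'h) event list \<Rightarrow> bool" for I where
  Nil: "feasible I []"
| PropI: "\<lbrakk> feasible I \<sigma>; r \<notin> res (tent \<sigma>); (r, h) \<notin> props \<sigma>; h \<in> set (rpref I r);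
           \<forall>h' \<in> set (takeWhile (\<lambda>x. x \<noteq> h) (rpref I r)). (r, h') \<in> rejs \<sigma> \<rbrakk>
         \<Longrightarrow> feasible I (\<sigma> @ [Prop r h])"
| RejI: "\<lbrakk> feasible I \<sigma>; ousted I (props \<sigma>) r h; (r, h) \<notin> rejs \<sigma> \<rbrakk>
         \<Longrightarrow> feasible I (\<sigma> @ [Rej r h])"

end

theory Submission
  imports Defs
begin

text \<open>Every condition for appending a proposal or a rejection is monotone in the events
already present, except for the conditions that the new match is not yet proposed or
rejected and that the resident is free. The latter is preserved because a resident proposes
down his list only after being rejected by every earlier hospital: if r were tentatively
matched in \<sigma>' to some h'', then h'' is not before h (those all reject r already in \<sigma>), so
h precedes h'', so r was rejected by h in \<sigma>', hence proposed to h in \<sigma>', contradicting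
e \<notin> \<sigma>'.\<close>

lemma props_mono: "set \<sigma> \<subseteq> set \<sigma>' \<Longrightarrow> props \<sigma> \<subseteq> props \<sigma>'"
  by (auto simp: props_def)

lemma rejs_mono: "set \<sigma> \<subseteq> set \<sigma>' \<Longrightarrow> rejs \<sigma> \<subseteq> rejs \<sigma>'"
  by (auto simp: rejs_def)

lemma props_snoc [simp]:
  "props (\<sigma> @ [e]) = props \<sigma> \<union> (case e of Prop r h \<Rightarrow> {(r, h)} | Rej r h \<Rightarrow> {})"
  by (cases e) (auto simp: props_def)

lemma rejs_snoc [simp]:
  "rejs (\<sigma> @ [e]) = rejs \<sigma> \<union> (case e of Rej r h \<Rightarrow> {(r, h)} | Prop r h \<Rightarrow> {})"
  by (cases e) (auto simp: rejs_def)

lemma feasible_snoc_PropD: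
  assumes "feasible I (\<sigma> @ [Prop r h])"
  shows "h \<in> set (rpref I r)"
    and "\<forall>h' \<in> set (takeWhile (\<lambda>x. x \<noteq> h) (rpref I r)). (r, h') \<in> rejs \<sigma>"
  using assms by (cases rule: feasible.cases; auto)+

lemma feasible_snoc_RejD:
  "feasible I (\<sigma> @ [Rej r h]) \<Longrightarrow> ousted I (props \<sigma>) r h"
  by (cases rule: feasible.cases) auto

lemma feasible_rejs_subset_props: "feasible I \<sigma> \<Longrightarrow> rejs \<sigma> \<subseteq> props \<sigma>"
  by (induction rule: feasible.induct) (auto simp: ousted_def props_def rejs_def)

lemma feasible_Prop_in_rpref:
  "feasible I \<sigma> \<Longrightarrow> Prop r h \<in> set \<sigma> \<Longrightarrow> h \<in> set (rpref I r)"
  by (induction rule: feasible.induct) auto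

lemma feasible_Prop_earlier_rejected:
  "feasible I \<sigma> \<Longrightarrow> Prop r h \<in> set \<sigma> \<Longrightarrow> h' \<in> set (takeWhile (\<lambda>x. x \<noteq> h) (rpref I r))
   \<Longrightarrow> (r, h') \<in> rejs \<sigma>"
  by (induction rule: feasible.induct) auto

lemma in_takeWhile_neq_if_not_in_takeWhile_neq:
  "h \<in> set xs \<Longrightarrow> h' \<noteq> h \<Longrightarrow> h' \<notin> set (takeWhile (\<lambda>x. x \<noteq> h) xs)
   \<Longrightarrow> h \<in> set (takeWhile (\<lambda>x. x \<noteq> h') xs)"
  by (induction xs) auto

lemma count_in_mono: "A \<subseteq> B \<Longrightarrow> count_in xs A \<le> count_in xs B"
  unfolding count_in_def by (induction xs) auto

lemma res_h_mono: "A \<subseteq> B \<Longrightarrow> res_h h A \<subseteq> res_h h B"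
  unfolding res_h_def by auto

lemma ousted_mono:
  assumes "ousted I A r h" and "A \<subseteq> B"
  shows "ousted I B r h"
proof -
  have "count_in xs (res_h h A) \<le> count_in xs (res_h h B)" for xs
    using count_in_mono[OF res_h_mono[OF assms(2)]] .
  with assms show ?thesis
    unfolding ousted_def by (meson le_trans subsetD)
qed

lemma feasible_snoc_Prop_transfer:
  assumes feas: "feasible I (\<sigma> @ [Prop r h])" and feas': "feasible I \<sigma>'"
    and sub: "set \<sigma> \<subseteq> set \<sigma>'" and new: "Prop r h \<notin> set \<sigma>'"
  shows "feasible I (\<sigma>' @ [Prop r h])"
proof -
  note h_pref = feasible_snoc_PropD(1)[OF feas]
  have earlier_rejected: "\<forall>h' \<in> set (takeWhile (\<lambda>x. x \<noteq> h) (rpref I r)). (r, h') \<in> rejs \<sigma>'"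
    using feasible_snoc_PropD(2)[OF feas] rejs_mono[OF sub] by blast
  have not_proposed: "(r, h) \<notin> props \<sigma>'"
    using new by (auto simp: props_def)
  have free: "r \<notin> res (tent \<sigma>')"
  proof
    assume "r \<in> res (tent \<sigma>')"
    then obtain h'' where h''_prop: "Prop r h'' \<in> set \<sigma>'" and h''_tent: "(r, h'') \<notin> rejs \<sigma>'"
      by (auto simp: res_def tent_def props_def)
    have "h'' \<noteq> h"
      using h''_prop new by auto
    moreover have "h'' \<notin> set (takeWhile (\<lambda>x. x \<noteq> h) (rpref I r))"
      using earlier_rejected h''_tent by blast
    ultimately have "h \<in> set (takeWhile (\<lambda>x. x \<noteq> h'') (rpref I r))"
      using in_takeWhile_neq_if_not_in_takeWhile_neq h_pref by metis
    then have "(r, h) \<in> rejs \<sigma>'"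
      using feasible_Prop_earlier_rejected[OF feas' h''_prop] by blast
    then show False
      using feasible_rejs_subset_props[OF feas'] not_proposed by blast
  qed
  show ?thesis
    using feasible.PropI[OF feas' free not_proposed h_pref earlier_rejected] .
qed

lemma feasible_snoc_Rej_transfer:
  assumes "feasible I (\<sigma> @ [Rej r h])" and "feasible I \<sigma>'"
    and "set \<sigma> \<subseteq> set \<sigma>'" and "Rej r h \<notin> set \<sigma>'"
  shows "feasible I (\<sigma>' @ [Rej r h])"
proof (rule feasible.RejI)
  show "ousted I (props \<sigma>') r h"
    using ousted_mono[OF feasible_snoc_RejD[OF assms(1)] props_mono[OF assms(3)]] .
  show "(r, h) \<notin> rejs \<sigma>'"
    using assms(4) by (auto simp: rejs_def)
qed (fact assms(2))

theorem proposition1: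
  fixes I :: "('r, 'h) inst"
    and \<sigma> \<sigma>' :: "('r, 'h) event list"
    and e :: "('r, 'h) event"
  assumes "wf_instance I"
    and "feasible I (\<sigma> @ [e])"
    and "feasible I \<sigma>'"
    and "set \<sigma> \<subseteq> set \<sigma>'"
    and "e \<notin> set \<sigma>'"
  shows "feasible I (\<sigma>' @ [e])"
  using assms(2-) feasible_snoc_Prop_transfer feasible_snoc_Rej_transfer
  by (cases e) auto

end
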